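(* Let $0<\varepsilon<1$ be arbitrary and let $n$ be a sufficiently large positive integer. Let $d=4\log n$, $m=n^2 2^d$, and sample $\mathcal{F}\sim\mathcal{F}(m,n,d)$. Then with high probability, every set $S$ of clauses of $\mathcal{F}$ of size $s\le n/(e d^2)$ satisfies $|\mathrm{vars}(S)|\ge(1-\varepsilon)ds$.
   Context: $\log$ is base 2. $\mathcal{F}(m,n,d)$: random $d$-CNF on $n$ variables with $m$ clauses sampled independently and uniformly with replacement from the $\binom{n}{d}2^d$ clauses on $d$ distinct variables. For a set $S$ of clauses, $\mathrm{vars}(S)$ is the set of variables appearing in some clause of $S$. "With high probability" means with probability tending to $1$ as $n\to\infty$. *)

theory Defs
  imports "HOL-Probability.Probability"
begin

text \<open>A clause is a finite set of literals (variable, sign); variables range over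
  {0..<n}; a d-clause has d distinct variables (no variable occurs twice).
  There are (n choose d) * 2^d such clauses.\<close>
definition dclauses :: "nat \<Rightarrow> nat \<Rightarrow> (nat \<times> bool) set set" where
  "dclauses n d = {C. finite C \<and> fst ` C \<subseteq> {..<n} \<and> inj_on fst C \<and> card (fst ` C) = d}"

text \<open>F(m,n,d): m clauses sampled independently and uniformly with replacement,
  i.e. a uniformly random length-m sequence of d-clauses.\<close>
definition random_dcnf :: "nat \<Rightarrow> nat \<Rightarrow> nat \<Rightarrow> (nat \<times> bool) set list pmf" where
  "random_dcnf m n d = pmf_of_set {F. length F = m \<and> set F \<subseteq> dclauses n d}"

text \<open>Variables of a set S of clauses of F (S given as a set of positions in F).\<close>
definition cvars :: "(nat \<times> bool) set list \<Rightarrow> nat set \<Rightarrow> nat set" where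
  "cvars F S = (\<Union>i\<in>S. fst ` (F ! i))"

definition dpar :: "nat \<Rightarrow> nat" where
  "dpar n = nat \<lceil>4 * log 2 (real n)\<rceil>"

definition mpar :: "nat \<Rightarrow> nat" where
  "mpar n = n ^ 2 * 2 ^ dpar n"

end

theory Submission
  imports Defs "HOL-Real_Asymp.Real_Asymp"
begin

text \<open>A set of \<open>s\<close> clauses with fewer than \<open>(1 - \<epsilon>) d s\<close> variables has all its clauses inside
  some set \<open>V\<close> of \<open>t = \<lfloor>(1 - \<epsilon>) d s\<rfloor>\<close> variables. For fixed positions \<open>S\<close> and fixed \<open>V\<close> this
  happens with probability \<open>(C(t,d) / C(n,d))^s \<le> (t/n)^(ds)\<close>. Since \<open>t \<le> d s \<le> n / (e d)\<close>,
  a union bound over \<open>S\<close> and \<open>V\<close> gives at most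
  \<open>m^s (n^t / t!) (t/n)^(ds) \<le> m^s e^t (e d)^(t - ds) \<le> q^s\<close> with \<open>q = m e^d (e d)^(-\<epsilon> d)\<close>.
  For \<open>d \<ge> 4 log n\<close>, \<open>m = n^2 2^d\<close> and \<open>d \<ge> exp (3 / \<epsilon>)\<close> we have \<open>q \<le> 1/n\<close>, and summing over
  \<open>s \<ge> 1\<close> bounds the failure probability by \<open>2/n\<close>.\<close>

lemma power_div_fact_le_exp:
  fixes x :: real
  assumes "0 \<le> x"
  shows "x ^ k / fact k \<le> exp x"
proof -
  have exp_sums: "(\<lambda>n. x ^ n /\<^sub>R fact n) sums exp x" by (rule exp_converges)
  have "(\<Sum>n\<in>{k}. x ^ n /\<^sub>R fact n) \<le> (\<Sum>n. x ^ n /\<^sub>R fact n)"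
    using exp_sums assms by (intro sum_le_suminf) (auto simp: sums_iff)
  then show ?thesis using exp_sums by (simp add: sums_iff divide_inverse mult.commute)
qed

lemma binomial_le_power_div_fact: "real (n choose k) \<le> real n ^ k / fact k"
proof -
  have "real ((n choose k) * fact k) \<le> real (n ^ k)"
    by (rule of_nat_mono[OF binomial_fact_pow])
  then show ?thesis by (simp add: le_divide_eq)
qed

lemma binomial_mult_power_le:
  assumes "t \<le> n"
  shows "(t choose d) * n ^ d \<le> (n choose d) * t ^ d"
proof (induction d)
  case 0
  then show ?case by simp
next
  case (Suc d)
  have absorb: "Suc d * (k choose Suc d) = (k choose d) * (k - d)" for k :: nat
    by (metis binomial_absorb_comp binomial_absorption mult.commute)
  have "(t - d) * n = t * n - d * n" by (simp add: diff_mult_distrib)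
  also have "\<dots> \<le> t * n - d * t" using assms by (intro diff_le_mono2) simp
  also have "\<dots> = (n - d) * t" by (metis diff_mult_distrib mult.commute)
  finally have "(t - d) * n \<le> (n - d) * t" .
  then have "((t choose d) * n ^ d) * ((t - d) * n) \<le> ((n choose d) * t ^ d) * ((n - d) * t)"
    by (rule mult_le_mono[OF Suc.IH])
  then have "Suc d * ((t choose Suc d) * n ^ Suc d) \<le> Suc d * ((n choose Suc d) * t ^ Suc d)"
    by (simp only: mult.assoc[symmetric] absorb) (simp add: ac_simps)
  then show ?case by (simp only: mult_le_cancel1)
qed

lemma binomial_ratio_le_power:
  assumes "t \<le> n" "d \<le> n"
  shows "real (t choose d) / real (n choose d) \<le> (real t / real n) ^ d"
proof (cases "d = 0")
  case False
  then have "real n > 0" using assms(2) by simp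
  moreover have "real (n choose d) > 0" using assms(2) by simp
  moreover have "real (t choose d) * real n ^ d \<le> real (n choose d) * real t ^ d"
    using of_nat_mono[OF binomial_mult_power_le[OF assms(1), of d]] by simp
  ultimately show ?thesis by (simp add: power_divide divide_simps mult.commute)
qed simp

lemma sum_power_le_twice:
  fixes q :: real
  assumes "0 \<le> q" "q \<le> 1/2"
  shows "(\<Sum>s=1..K. q ^ s) \<le> 2 * q"
proof (cases "K = 0")
  case False
  have "(1 - q) * (\<Sum>s=1..K. q ^ s) = q - q ^ Suc K"
    using False by (simp add: sum_gp_multiplied)
  also have "\<dots> \<le> q" using assms by simp
  finally have "(1 - q) * (\<Sum>s=1..K. q ^ s) \<le> q" .
  moreover have "(1 / 2) * (\<Sum>s=1..K. q ^ s) \<le> (1 - q) * (\<Sum>s=1..K. q ^ s)"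
    using assms by (intro mult_right_mono sum_nonneg) auto
  ultimately show ?thesis by simp
qed (use assms in simp)

section \<open>Counting clauses\<close>

definition signings :: "'a set \<Rightarrow> ('a \<times> bool) set set" where
  "signings X = {C. fst ` C = X \<and> inj_on fst C}"

lemma signing_eq_graph:
  assumes "C \<in> signings X"
  shows "(\<lambda>x. (x, (x, True) \<in> C)) ` X = C"
proof -
  have X: "fst ` C = X" and inj: "inj_on fst C" using assms by (auto simp: signings_def)
  have unique: "(x, True) \<notin> C" if "(x, False) \<in> C" for x
    using inj_onD[OF inj, of "(x, True)" "(x, False)"] that by auto
  have mem: "(x, b) \<in> C \<longleftrightarrow> x \<in> X \<and> b = ((x, True) \<in> C)" for x b
  proof
    assume xb: "(x, b) \<in> C"
    then have "x \<in> X" using X by (metis fst_conv image_eqI)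
    moreover have "b = ((x, True) \<in> C)" using xb unique by (cases b) auto
    ultimately show "x \<in> X \<and> b = ((x, True) \<in> C)" ..
  next
    assume xb: "x \<in> X \<and> b = ((x, True) \<in> C)"
    then obtain b' where "(x, b') \<in> C" using X by (metis fst_conv imageE prod.collapse)
    then show "(x, b) \<in> C" using xb by (cases b') auto
  qed
  show ?thesis
  proof (rule set_eqI)
    fix p :: "'a \<times> bool"
    obtain x b where p: "p = (x, b)" by (cases p)
    show "p \<in> (\<lambda>x. (x, (x, True) \<in> C)) ` X \<longleftrightarrow> p \<in> C"
      unfolding p mem[of x b] by blast
  qed
qed

lemma card_signings:
  assumes "finite X"
  shows "card (signings X) = 2 ^ card X" and "finite (signings X)"
proof -
  have bij: "bij_betw (\<lambda>C. {x. (x, True) \<in> C}) (signings X) (Pow X)"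
  proof (rule bij_betw_byWitness[where f' = "\<lambda>A. (\<lambda>x. (x, x \<in> A)) ` X"])
    show "\<forall>C\<in>signings X. (\<lambda>x. (x, x \<in> {x. (x, True) \<in> C})) ` X = C"
      by (simp add: signing_eq_graph)
    show "\<forall>A\<in>Pow X. {x. (x, True) \<in> (\<lambda>x. (x, x \<in> A)) ` X} = A" by auto
    show "(\<lambda>C. {x. (x, True) \<in> C}) ` signings X \<subseteq> Pow X"
      by (force simp: signings_def)
    show "(\<lambda>A. (\<lambda>x. (x, x \<in> A)) ` X) ` Pow X \<subseteq> signings X"
      by (auto simp: signings_def inj_on_def image_image)
  qed
  show "card (signings X) = 2 ^ card X"
    using bij_betw_same_card[OF bij] assms by (simp add: card_Pow)
  show "finite (signings X)"
    using bij_betw_finite[OF bij] assms by simp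
qed

definition clauses_on :: "nat \<Rightarrow> 'a set \<Rightarrow> ('a \<times> bool) set set" where
  "clauses_on d V = {C. finite C \<and> fst ` C \<subseteq> V \<and> inj_on fst C \<and> card (fst ` C) = d}"

lemma dclauses_eq_clauses_on: "dclauses n d = clauses_on d {..<n}"
  by (simp add: dclauses_def clauses_on_def)

lemma clauses_on_mono: "V \<subseteq> W \<Longrightarrow> clauses_on d V \<subseteq> clauses_on d W"
  by (auto simp: clauses_on_def)

lemma clauses_on_eq_UN_signings:
  assumes "finite V"
  shows "clauses_on d V = (\<Union>X\<in>{X. X \<subseteq> V \<and> card X = d}. signings X)"
proof -
  have "finite C" if "fst ` C \<subseteq> V" "inj_on fst C" for C :: "('a \<times> bool) set"
    using that assms finite_imageD finite_subset by blast
  then show ?thesis by (auto simp: clauses_on_def signings_def)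
qed

lemma card_clauses_on:
  assumes "finite V"
  shows "card (clauses_on d V) = (card V choose d) * 2 ^ d"
    and "finite (clauses_on d V)"
proof -
  let ?Xs = "{X. X \<subseteq> V \<and> card X = d}"
  have fin: "finite ?Xs" and fin_X: "\<And>X. X \<in> ?Xs \<Longrightarrow> finite X"
    using assms finite_subset by auto
  have "card (\<Union>X\<in>?Xs. signings X) = (\<Sum>X\<in>?Xs. card (signings X))"
  proof (rule card_UN_disjoint[OF fin])
    show "\<forall>X\<in>?Xs. finite (signings X)" using fin_X card_signings(2) by blast
    show "\<forall>X\<in>?Xs. \<forall>Y\<in>?Xs. X \<noteq> Y \<longrightarrow> signings X \<inter> signings Y = {}"
      unfolding signings_def by blast
  qed
  also have "\<dots> = (\<Sum>X\<in>?Xs. 2 ^ d)"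
    using fin_X card_signings(1) by (intro sum.cong) auto
  also have "\<dots> = (card V choose d) * 2 ^ d"
    using n_subsets[OF assms] by simp
  finally show "card (clauses_on d V) = (card V choose d) * 2 ^ d"
    unfolding clauses_on_eq_UN_signings[OF assms] .
  show "finite (clauses_on d V)"
    unfolding clauses_on_eq_UN_signings[OF assms] using fin fin_X card_signings(2) by blast
qed

lemma card_dclauses: "card (dclauses n d) = (n choose d) * 2 ^ d"
  and finite_dclauses: "finite (dclauses n d)"
  using card_clauses_on[of "{..<n}" d] by (simp_all add: dclauses_eq_clauses_on)

lemma dclauses_nonempty: "d \<le> n \<Longrightarrow> dclauses n d \<noteq> {}"
  using card_dclauses[of n d] by (metis binomial_eq_0_iff card.empty mult_is_0 not_le power_not_zero zero_neq_numeral)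

section \<open>Uniformly random lists of clauses\<close>

lemma card_lists_nth_in:
  assumes "\<And>i. i < m \<Longrightarrow> finite (A i)"
  shows "card {xs. length xs = m \<and> (\<forall>i<m. xs ! i \<in> A i)} = (\<Prod>i<m. card (A i))"
  using assms
proof (induction m arbitrary: A)
  case 0
  then show ?case by simp
next
  case (Suc m)
  let ?tails = "{xs. length xs = m \<and> (\<forall>i<m. xs ! i \<in> A (Suc i))}"
  have "{xs. length xs = Suc m \<and> (\<forall>i<Suc m. xs ! i \<in> A i)} = (\<lambda>(x, xs). x # xs) ` (A 0 \<times> ?tails)"
  proof (intro set_eqI iffI)
    fix xs assume "xs \<in> {xs. length xs = Suc m \<and> (\<forall>i<Suc m. xs ! i \<in> A i)}"
    then show "xs \<in> (\<lambda>(x, xs). x # xs) ` (A 0 \<times> ?tails)"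
      by (cases xs) force+
  qed (auto simp: less_Suc_eq_0_disj)
  moreover have "inj_on (\<lambda>(x, xs). x # xs) (A 0 \<times> ?tails)"
    by (auto simp: inj_on_def)
  ultimately have "card {xs. length xs = Suc m \<and> (\<forall>i<Suc m. xs ! i \<in> A i)} = card (A 0) * card ?tails"
    by (simp add: card_image card_cartesian_product)
  also have "\<dots> = card (A 0) * (\<Prod>i<m. card (A (Suc i)))"
    using Suc by simp
  also have "\<dots> = (\<Prod>i<Suc m. card (A i))"
    by (rule prod.lessThan_Suc_shift[symmetric])
  finally show ?case .
qed

lemma lists_length_eq_finite_nonempty:
  assumes "finite A" "A \<noteq> {}"
  shows "finite {xs. length xs = m \<and> set xs \<subseteq> A}" and "{xs. length xs = m \<and> set xs \<subseteq> A} \<noteq> {}"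
proof -
  show "finite {xs. length xs = m \<and> set xs \<subseteq> A}"
    using finite_lists_length_eq[OF assms(1), of m] by (simp add: conj_commute)
  obtain a where "a \<in> A" using assms(2) by blast
  then have "replicate m a \<in> {xs. length xs = m \<and> set xs \<subseteq> A}" by (simp add: set_replicate_conv_if)
  then show "{xs. length xs = m \<and> set xs \<subseteq> A} \<noteq> {}" by blast
qed

lemma prob_uniform_lists_nth_in:
  assumes A: "finite A" "A \<noteq> {}" and B: "B \<subseteq> A" and S: "S \<subseteq> {..<m}"
  shows "measure_pmf.prob (pmf_of_set {xs. length xs = m \<and> set xs \<subseteq> A}) {xs. \<forall>i\<in>S. xs ! i \<in> B}
       = (real (card B) / real (card A)) ^ card S"
proof -
  let ?L = "{xs. length xs = m \<and> set xs \<subseteq> A}"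
  have L_eq: "?L = {xs. length xs = m \<and> (\<forall>i<m. xs ! i \<in> A)}"
    by (auto simp: set_conv_nth)
  have card_L: "card ?L = card A ^ m"
    using card_lists_length_eq[OF A(1), of m] by (simp add: conj_commute)
  note L = lists_length_eq_finite_nonempty[OF A, of m]
  have fin_B: "finite B" using A(1) B finite_subset by blast
  have "?L \<inter> {xs. \<forall>i\<in>S. xs ! i \<in> B}
      = {xs. length xs = m \<and> (\<forall>i<m. xs ! i \<in> (if i \<in> S then B else A))}"
  proof (intro set_eqI iffI)
    fix xs assume "xs \<in> ?L \<inter> {xs. \<forall>i\<in>S. xs ! i \<in> B}"
    then show "xs \<in> {xs. length xs = m \<and> (\<forall>i<m. xs ! i \<in> (if i \<in> S then B else A))}"
      unfolding L_eq by simp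
  next
    fix xs assume "xs \<in> {xs. length xs = m \<and> (\<forall>i<m. xs ! i \<in> (if i \<in> S then B else A))}"
    then have len: "length xs = m" and nth: "\<And>i. i < m \<Longrightarrow> xs ! i \<in> (if i \<in> S then B else A)"
      by auto
    have "xs ! i \<in> A" if "i < m" for i using nth[OF that] B by (auto split: if_splits)
    moreover have "xs ! i \<in> B" if "i \<in> S" for i using nth[of i] S that by auto
    ultimately show "xs \<in> ?L \<inter> {xs. \<forall>i\<in>S. xs ! i \<in> B}"
      unfolding L_eq using len by blast
  qed
  then have "card (?L \<inter> {xs. \<forall>i\<in>S. xs ! i \<in> B}) = (\<Prod>i<m. card (if i \<in> S then B else A))"
    using A(1) fin_B by (simp add: card_lists_nth_in)
  also have "\<dots> = card B ^ card S * card A ^ (m - card S)"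
  proof -
    have "(\<Prod>i<m. card (if i \<in> S then B else A)) = (\<Prod>i<m. if i \<in> S then card B else card A)"
      by (rule prod.cong) auto
    moreover have "{..<m} \<inter> {i. i \<in> S} = S" "{..<m} \<inter> - {i. i \<in> S} = {..<m} - S"
      using S by auto
    ultimately show ?thesis
      using S by (simp add: prod.If_cases card_Diff_subset finite_subset)
  qed
  finally have card_E: "card (?L \<inter> {xs. \<forall>i\<in>S. xs ! i \<in> B}) = card B ^ card S * card A ^ (m - card S)" .
  have "card S \<le> m" using card_mono[OF finite_lessThan S] by simp
  then have split_m: "real (card A) ^ m = real (card A) ^ card S * real (card A) ^ (m - card S)"
    by (simp flip: power_add)
  have "real (card A) ^ (m - card S) \<noteq> 0" using A by simp
  then show ?thesis
    unfolding measure_pmf_of_set[OF L(2,1)] card_E card_L of_nat_mult of_nat_power split_m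
    by (simp add: power_divide)
qed

lemma prob_clauses_within:
  assumes S: "S \<subseteq> {..<m}" and V: "V \<subseteq> {..<n}" and "d \<le> n"
  shows "measure_pmf.prob (random_dcnf m n d) {F. \<forall>i\<in>S. F ! i \<in> clauses_on d V}
       = (real (card V choose d) / real (n choose d)) ^ card S"
proof -
  have fin_V: "finite V" using V finite_subset by blast
  have sub: "clauses_on d V \<subseteq> dclauses n d"
    unfolding dclauses_eq_clauses_on using V by (rule clauses_on_mono)
  have "measure_pmf.prob (random_dcnf m n d) {F. \<forall>i\<in>S. F ! i \<in> clauses_on d V}
      = (real (card (clauses_on d V)) / real (card (dclauses n d))) ^ card S"
    unfolding random_dcnf_def using finite_dclauses dclauses_nonempty[OF \<open>d \<le> n\<close>] sub S
    by (rule prob_uniform_lists_nth_in)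
  also have "real (card (clauses_on d V)) / real (card (dclauses n d))
      = real (card V choose d) / real (n choose d)"
    unfolding card_dclauses card_clauses_on(1)[OF fin_V] of_nat_mult
    by (rule nonzero_mult_divide_mult_cancel_right) simp
  finally show ?thesis .
qed

section \<open>The union bound\<close>

definition expanding_cnfs :: "real \<Rightarrow> nat \<Rightarrow> nat \<Rightarrow> (nat \<times> bool) set list set" where
  "expanding_cnfs \<epsilon> n d = {F. \<forall>S. S \<subseteq> {..<length F} \<and> real (card S) \<le> real n / (exp 1 * real d ^ 2)
      \<longrightarrow> real (card (cvars F S)) \<ge> (1 - \<epsilon>) * real d * real (card S)}"

definition max_deficient_vars :: "real \<Rightarrow> nat \<Rightarrow> nat \<Rightarrow> nat" where
  "max_deficient_vars \<epsilon> d s = nat \<lfloor>(1 - \<epsilon>) * real d * real s\<rfloor>"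

definition deficient_cnfs :: "real \<Rightarrow> nat \<Rightarrow> nat \<Rightarrow> nat \<Rightarrow> nat \<Rightarrow> (nat \<times> bool) set list set" where
  "deficient_cnfs \<epsilon> m n d s =
    (\<Union>S\<in>{S. S \<subseteq> {..<m} \<and> card S = s}. \<Union>V\<in>{V. V \<subseteq> {..<n} \<and> card V = max_deficient_vars \<epsilon> d s}.
      {F. \<forall>i\<in>S. F ! i \<in> clauses_on d V})"

lemma max_deficient_vars_le:
  assumes "0 < \<epsilon>" "\<epsilon> < 1"
  shows "real (max_deficient_vars \<epsilon> d s) \<le> (1 - \<epsilon>) * real d * real s"
    and "max_deficient_vars \<epsilon> d s \<le> d * s"
proof -
  show le: "real (max_deficient_vars \<epsilon> d s) \<le> (1 - \<epsilon>) * real d * real s"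
    unfolding max_deficient_vars_def using assms by simp
  have "(1 - \<epsilon>) * real d * real s \<le> real d * real s"
    using assms by (simp add: mult_right_mono mult_left_le_one_le)
  then show "max_deficient_vars \<epsilon> d s \<le> d * s"
    using le by (simp flip: of_nat_mult)
qed

lemma small_size_le:
  assumes "1 \<le> d" "real s \<le> real n / (exp 1 * real d ^ 2)"
  shows "exp 1 * real d * real (d * s) \<le> real n" and "d * s \<le> n"
proof -
  have "0 < exp 1 * real d ^ 2" using assms(1) by simp
  then have "real s * (exp 1 * real d ^ 2) \<le> real n" using assms(2) by (simp add: pos_le_divide_eq)
  then show le_n: "exp 1 * real d * real (d * s) \<le> real n" by (simp add: power2_eq_square ac_simps)
  have "1 * 1 \<le> exp 1 * real d" using assms(1) by (intro mult_mono) auto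
  then have "real (d * s) \<le> exp 1 * real d * real (d * s)"
    using mult_right_mono[of 1 "exp 1 * real d" "real (d * s)"] by simp
  then have "real (d * s) \<le> real n" using le_n by linarith
  then show "d * s \<le> n" by (simp only: of_nat_le_iff)
qed

lemma non_expanding_witness:
  assumes d: "1 \<le> d" and \<epsilon>: "0 < \<epsilon>" "\<epsilon> < 1"
    and F: "length F = m" "set F \<subseteq> dclauses n d" "F \<notin> expanding_cnfs \<epsilon> n d"
  obtains s where "1 \<le> s" "real s \<le> real n / (exp 1 * real d ^ 2)" "F \<in> deficient_cnfs \<epsilon> m n d s"
proof -
  obtain S where S: "S \<subseteq> {..<m}" and small: "real (card S) \<le> real n / (exp 1 * real d ^ 2)"
    and few: "real (card (cvars F S)) < (1 - \<epsilon>) * real d * real (card S)"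
    using F unfolding expanding_cnfs_def by (auto simp: not_le)
  have clause_F: "F ! i \<in> clauses_on d {..<n}" if "i \<in> S" for i
  proof -
    have "F ! i \<in> set F" using S F(1) that by auto
    then show ?thesis using F(2) by (auto simp: dclauses_eq_clauses_on)
  qed
  have "S \<noteq> {}" using few by (auto simp: cvars_def)
  then have nonempty: "1 \<le> card S" using S finite_subset by (fastforce simp: Suc_le_eq card_gt_0_iff)
  have vars_S: "cvars F S \<subseteq> {..<n}" using clause_F by (auto simp: cvars_def clauses_on_def)
  have few_le: "card (cvars F S) \<le> max_deficient_vars \<epsilon> d (card S)"
    unfolding max_deficient_vars_def using few by (intro le_nat_floor) simp
  moreover have le_n: "max_deficient_vars \<epsilon> d (card S) \<le> card {..<n}"
    using max_deficient_vars_le(2)[OF \<epsilon>, of d "card S"] small_size_le(2)[OF d small] by simp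
  ultimately obtain V where V: "cvars F S \<subseteq> V" "V \<subseteq> {..<n}" "card V = max_deficient_vars \<epsilon> d (card S)"
    using exists_subset_between[OF few_le le_n vars_S finite_lessThan] by blast
  have "fst ` (F ! i) \<subseteq> V" if "i \<in> S" for i using V(1) that by (auto simp: cvars_def)
  then have "\<forall>i\<in>S. F ! i \<in> clauses_on d V"
    using clause_F unfolding clauses_on_def by blast
  then have "F \<in> deficient_cnfs \<epsilon> m n d (card S)"
    unfolding deficient_cnfs_def using S V(2,3) by blast
  then show ?thesis using that nonempty small by blast
qed

lemma choose_mult_power_ratio_le:
  fixes c \<epsilon> :: real
  assumes "t \<le> x" "0 < n" "real t / real n \<le> 1 / c" "1 \<le> c" "\<epsilon> * real x \<le> real x - real t"
  shows "real (n choose t) * (real t / real n) ^ x \<le> exp (real x) * c powr (- \<epsilon> * real x)"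
proof -
  have split_x: "(real t / real n) ^ x = (real t / real n) ^ t * (real t / real n) ^ (x - t)"
    using assms(1) by (simp flip: power_add)
  have "real (n choose t) * (real t / real n) ^ x \<le> real n ^ t / fact t * (real t / real n) ^ x"
    by (intro mult_right_mono binomial_le_power_div_fact) simp
  also have "\<dots> = real t ^ t / fact t * (real t / real n) ^ (x - t)"
    using assms(2) unfolding split_x by (simp add: power_divide)
  also have "\<dots> \<le> exp (real t) * (1 / c) ^ (x - t)"
    using assms(3) by (intro mult_mono power_mono power_div_fact_le_exp) auto
  also have "\<dots> \<le> exp (real x) * (1 / c) ^ (x - t)"
    using assms(1,4) by (intro mult_right_mono) auto
  also have "(1 / c) ^ (x - t) = c powr (- real (x - t))"
    using assms(4) by (simp add: powr_minus powr_realpow power_one_over divide_inverse power_inverse)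
  also have "\<dots> \<le> c powr (- \<epsilon> * real x)"
    using assms(1,4,5) by (intro powr_mono) (auto simp: of_nat_diff)
  finally show ?thesis by (simp add: mult_left_mono)
qed

definition failure_ratio :: "real \<Rightarrow> nat \<Rightarrow> nat \<Rightarrow> real" where
  "failure_ratio \<epsilon> m d = real m * exp (real d) * (exp 1 * real d) powr (- \<epsilon> * real d)"

lemma expected_deficient_sets_le:
  assumes d: "1 \<le> d" "d \<le> n" and \<epsilon>: "0 < \<epsilon>" "\<epsilon> < 1"
    and small: "real s \<le> real n / (exp 1 * real d ^ 2)"
    and t: "t = max_deficient_vars \<epsilon> d s"
  shows "real (m choose s) * real (n choose t) * (real (t choose d) / real (n choose d)) ^ s
     \<le> failure_ratio \<epsilon> m d ^ s"
proof -
  define c where "c = exp 1 * real d"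
  define x where "x = d * s"
  have c: "1 \<le> c" unfolding c_def using d(1) mult_mono[of 1 "exp 1" 1 "real d"] by simp
  have n: "0 < n" using d by simp
  have t_le: "real t \<le> (1 - \<epsilon>) * real x" "t \<le> x"
    using max_deficient_vars_le[OF \<epsilon>, of d s] t unfolding x_def by auto
  have "c * real t \<le> c * real x" using t_le(2) c by (intro mult_left_mono) auto
  also have "\<dots> \<le> real n" using small_size_le(1)[OF d(1) small] unfolding c_def x_def .
  finally have ratio: "real t / real n \<le> 1 / c"
    using c n by (simp add: divide_simps mult.commute)
  have "t \<le> n" using t_le(2) small_size_le(2)[OF d(1) small] unfolding x_def by simp
  have "(real (t choose d) / real (n choose d)) ^ s \<le> ((real t / real n) ^ d) ^ s"
    using \<open>t \<le> n\<close> d(2) by (intro power_mono binomial_ratio_le_power) auto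
  then have binom_s: "(real (t choose d) / real (n choose d)) ^ s \<le> (real t / real n) ^ x"
    unfolding x_def by (simp add: power_mult)
  have "m choose s \<le> (m choose s) * fact s" by simp
  then have "real (m choose s) \<le> real m ^ s"
    using binomial_fact_pow[of m s] by (metis le_trans of_nat_le_iff of_nat_power)
  then have "real (m choose s) * real (n choose t) * (real (t choose d) / real (n choose d)) ^ s
      \<le> real m ^ s * (real (n choose t) * (real t / real n) ^ x)"
    unfolding mult.assoc using binom_s by (intro mult_mono) auto
  also have "\<dots> \<le> real m ^ s * (exp (real x) * c powr (- \<epsilon> * real x))"
    using t_le c n ratio by (intro mult_left_mono choose_mult_power_ratio_le) (auto simp: algebra_simps)
  also have "\<dots> = failure_ratio \<epsilon> m d ^ s"
    unfolding failure_ratio_def c_def x_def using d(1)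
    by (simp add: power_mult_distrib powr_power exp_of_nat_mult[symmetric] ac_simps)
  finally show ?thesis .
qed

lemma prob_deficient_size_le:
  assumes "1 \<le> d" "d \<le> n" "0 < \<epsilon>" "\<epsilon> < 1" "real s \<le> real n / (exp 1 * real d ^ 2)"
  shows "measure_pmf.prob (random_dcnf m n d) (deficient_cnfs \<epsilon> m n d s) \<le> failure_ratio \<epsilon> m d ^ s"
proof -
  let ?P = "random_dcnf m n d"
  let ?t = "max_deficient_vars \<epsilon> d s"
  let ?Ss = "{S. S \<subseteq> {..<m} \<and> card S = s}" and ?Vs = "{V. V \<subseteq> {..<n} \<and> card V = ?t}"
  let ?r = "(real (?t choose d) / real (n choose d)) ^ s"
  have fin: "finite ?Ss" "finite ?Vs" by (auto intro: finite_subset[of _ "Pow _"])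
  have "measure_pmf.prob ?P (deficient_cnfs \<epsilon> m n d s)
      \<le> (\<Sum>S\<in>?Ss. measure_pmf.prob ?P (\<Union>V\<in>?Vs. {F. \<forall>i\<in>S. F ! i \<in> clauses_on d V}))"
    unfolding deficient_cnfs_def using fin by (intro measure_pmf.finite_measure_subadditive_finite) auto
  also have "\<dots> \<le> (\<Sum>S\<in>?Ss. \<Sum>V\<in>?Vs. measure_pmf.prob ?P {F. \<forall>i\<in>S. F ! i \<in> clauses_on d V})"
    using fin by (intro sum_mono measure_pmf.finite_measure_subadditive_finite) auto
  also have "\<dots> = (\<Sum>S\<in>?Ss. \<Sum>V\<in>?Vs. ?r)"
    using assms(2) by (intro sum.cong refl) (auto simp: prob_clauses_within)
  also have "\<dots> = real (m choose s) * real (n choose ?t) * ?r"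
    by (simp add: n_subsets)
  also have "\<dots> \<le> failure_ratio \<epsilon> m d ^ s"
    using assms by (intro expected_deficient_sets_le) auto
  finally show ?thesis .
qed

lemma prob_compl_set_pmf: "1 - measure_pmf.prob p A = measure_pmf.prob p (set_pmf p - A)"
proof -
  have "1 - measure_pmf.prob p A = measure_pmf.prob p ((UNIV - A) \<inter> set_pmf p)"
    using measure_pmf.prob_compl[of A p] by (simp add: measure_Int_set_pmf)
  also have "(UNIV - A) \<inter> set_pmf p = set_pmf p - A" by blast
  finally show ?thesis .
qed

lemma prob_expanding_ge:
  assumes d: "1 \<le> d" "d \<le> n" and \<epsilon>: "0 < \<epsilon>" "\<epsilon> < 1" and q: "failure_ratio \<epsilon> m d \<le> 1 / 2"
  shows "1 - 2 * failure_ratio \<epsilon> m d \<le> measure_pmf.prob (random_dcnf m n d) (expanding_cnfs \<epsilon> n d)"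
proof -
  let ?P = "random_dcnf m n d"
  let ?K = "nat \<lfloor>real n / (exp 1 * real d ^ 2)\<rfloor>"
  have support: "set_pmf ?P = {F. length F = m \<and> set F \<subseteq> dclauses n d}"
    unfolding random_dcnf_def using d(2)
    by (intro set_pmf_of_set lists_length_eq_finite_nonempty finite_dclauses dclauses_nonempty)
  have size_le_K: "real s \<le> real n / (exp 1 * real d ^ 2) \<longleftrightarrow> s \<le> ?K" for s
  proof
    show "real s \<le> real n / (exp 1 * real d ^ 2) \<Longrightarrow> s \<le> ?K" by (rule le_nat_floor)
    have "0 \<le> real n / (exp 1 * real d ^ 2)" by simp
    then show "s \<le> ?K \<Longrightarrow> real s \<le> real n / (exp 1 * real d ^ 2)" by linarith
  qed
  have cover: "set_pmf ?P - expanding_cnfs \<epsilon> n d \<subseteq> (\<Union>s\<in>{1..?K}. deficient_cnfs \<epsilon> m n d s)"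
  proof
    fix F assume "F \<in> set_pmf ?P - expanding_cnfs \<epsilon> n d"
    then obtain s where "1 \<le> s" "real s \<le> real n / (exp 1 * real d ^ 2)" "F \<in> deficient_cnfs \<epsilon> m n d s"
      using non_expanding_witness[OF d(1) \<epsilon>] support by blast
    then show "F \<in> (\<Union>s\<in>{1..?K}. deficient_cnfs \<epsilon> m n d s)" using size_le_K by auto
  qed
  have "1 - measure_pmf.prob ?P (expanding_cnfs \<epsilon> n d)
      = measure_pmf.prob ?P (set_pmf ?P - expanding_cnfs \<epsilon> n d)"
    by (rule prob_compl_set_pmf)
  also have "\<dots> \<le> measure_pmf.prob ?P (\<Union>s\<in>{1..?K}. deficient_cnfs \<epsilon> m n d s)"
    using cover by (intro measure_pmf.finite_measure_mono) auto
  also have "\<dots> \<le> (\<Sum>s=1..?K. measure_pmf.prob ?P (deficient_cnfs \<epsilon> m n d s))"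
    by (intro measure_pmf.finite_measure_subadditive_finite) auto
  also have "\<dots> \<le> (\<Sum>s=1..?K. failure_ratio \<epsilon> m d ^ s)"
    using size_le_K by (intro sum_mono prob_deficient_size_le d \<epsilon>) auto
  also have "\<dots> \<le> 2 * failure_ratio \<epsilon> m d"
    using q by (intro sum_power_le_twice) (simp add: failure_ratio_def)
  finally show ?thesis by simp
qed

section \<open>The parameters \<open>d\<close> and \<open>m\<close>\<close>

lemma failure_ratio_le_inverse:
  assumes \<epsilon>: "0 < \<epsilon>" and n: "2 \<le> n"
    and d_log: "4 * log 2 (real n) \<le> real d" and d_large: "exp (3 / \<epsilon>) \<le> real d"
  shows "failure_ratio \<epsilon> (n ^ 2 * 2 ^ d) d \<le> 1 / real n"
proof -
  define D where "D = real d"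
  have n_pos: "0 < real n" using n by simp
  have D_pos: "0 < D" unfolding D_def using d_large by (smt (verit) exp_gt_zero)
  have ln2: "0 < ln (2::real)" "ln (2::real) < 1" by (simp, rule ln_2_less_1)
  have "4 * ln (real n) \<le> D * ln 2"
    using d_log ln2 unfolding D_def by (simp add: log_def divide_le_eq mult.commute)
  then have ln_n: "4 * ln (real n) \<le> D" using ln2 D_pos by (smt (verit) mult_left_le)
  have "3 / \<epsilon> \<le> ln D" using d_large D_pos unfolding D_def by (metis exp_le_cancel_iff exp_ln)
  then have "3 * D \<le> \<epsilon> * D * ln D"
    using \<epsilon> D_pos by (simp add: divide_le_eq mult.commute mult_right_mono)
  moreover have "D * ln 2 \<le> D" using ln2 D_pos by (simp add: mult_left_le)
  moreover have "0 \<le> \<epsilon> * D" using \<epsilon> D_pos by simp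
  moreover have "\<epsilon> * D * (1 + ln D) = \<epsilon> * D + \<epsilon> * D * ln D" by (simp add: algebra_simps)
  ultimately have exponent: "3 * ln (real n) + D * ln 2 + D + - (\<epsilon> * D * (1 + ln D)) \<le> 0"
    using ln_n D_pos by linarith
  have "exp (3 * ln (real n)) = real n ^ 3"
    using exp_of_nat_mult[of 3 "ln (real n)"] n_pos by simp
  moreover have "exp (D * ln 2) = 2 ^ d"
    using exp_of_nat_mult[of d "ln (2::real)"] unfolding D_def by simp
  moreover have "(exp 1 * D) powr (- \<epsilon> * D) = exp (- (\<epsilon> * D * (1 + ln D)))"
    using D_pos by (simp add: powr_def ln_mult)
  ultimately have "failure_ratio \<epsilon> (n ^ 2 * 2 ^ d) d * real n
      = exp (3 * ln (real n)) * exp (D * ln 2) * exp D * exp (- (\<epsilon> * D * (1 + ln D)))"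
    unfolding failure_ratio_def D_def[symmetric] by (simp add: power3_eq_cube power2_eq_square ac_simps)
  also have "\<dots> = exp (3 * ln (real n) + D * ln 2 + D + - (\<epsilon> * D * (1 + ln D)))"
    by (simp only: exp_add)
  also have "\<dots> \<le> 1" using exponent by simp
  finally show ?thesis using n_pos by (simp add: le_divide_eq)
qed

lemma dpar_ge_log: "4 * log 2 (real n) \<le> real (dpar n)"
proof -
  have "4 * log 2 (real n) \<le> of_int \<lceil>4 * log 2 (real n)\<rceil>" by (rule le_of_int_ceiling)
  also have "\<dots> \<le> real (dpar n)" unfolding dpar_def by linarith
  finally show ?thesis .
qed

lemma eventually_dpar_le: "eventually (\<lambda>n. dpar n \<le> n) sequentially"
proof -
  have "eventually (\<lambda>n. 4 * log 2 (real n) + 1 \<le> real n) sequentially" by real_asymp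
  then show ?thesis using eventually_ge_at_top[of 1]
  proof eventually_elim
    case (elim n)
    then have "0 \<le> 4 * log 2 (real n)" by simp
    then have "real (dpar n) \<le> 4 * log 2 (real n) + 1"
      unfolding dpar_def using of_int_ceiling_le_add_one[of "4 * log 2 (real n)"] by linarith
    then show ?case using elim(1) by linarith
  qed
qed

lemma eventually_dpar_ge: "eventually (\<lambda>n. c \<le> real (dpar n)) sequentially"
proof -
  have "filterlim (\<lambda>n. 4 * log 2 (real n)) at_top sequentially" by real_asymp
  then have "eventually (\<lambda>n. c \<le> 4 * log 2 (real n)) sequentially"
    by (simp add: filterlim_at_top)
  then show ?thesis by eventually_elim (rule order.trans[OF _ dpar_ge_log])
qed

theorem mainTheorem7:
  fixes \<epsilon> :: real
  assumes "0 < \<epsilon>" and "\<epsilon> < 1"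
  shows "(\<lambda>n. measure_pmf.prob (random_dcnf (mpar n) n (dpar n))
            {F. \<forall>S. S \<subseteq> {..<length F} \<and> real (card S) \<le> real n / (exp 1 * real (dpar n) ^ 2)
                  \<longrightarrow> real (card (cvars F S)) \<ge> (1 - \<epsilon>) * real (dpar n) * real (card S)})
         \<longlonglongrightarrow> 1"
proof -
  let ?p = "\<lambda>n. measure_pmf.prob (random_dcnf (mpar n) n (dpar n)) (expanding_cnfs \<epsilon> n (dpar n))"
  have "eventually (\<lambda>n. 1 - 2 / real n \<le> ?p n) sequentially"
    using eventually_ge_at_top[of 2] eventually_dpar_le eventually_dpar_ge[of "exp (3 / \<epsilon>)"]
  proof eventually_elim
    case (elim n)
    have "1 \<le> exp (3 / \<epsilon>)" using assms(1) by simp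
    then have "1 \<le> dpar n" using elim(3) by linarith
    from elim have q: "failure_ratio \<epsilon> (mpar n) (dpar n) \<le> 1 / real n"
      unfolding mpar_def using assms(1) dpar_ge_log by (intro failure_ratio_le_inverse) auto
    also have "\<dots> \<le> 1 / 2" using elim by simp
    finally have "1 - 2 * failure_ratio \<epsilon> (mpar n) (dpar n) \<le> ?p n"
      using \<open>1 \<le> dpar n\<close> elim(2) assms by (intro prob_expanding_ge) auto
    then show ?case using q by simp
  qed
  moreover have "eventually (\<lambda>n. ?p n \<le> 1) sequentially" by (simp add: measure_pmf.prob_le_1)
  moreover have "(\<lambda>n. 1 - 2 / real n) \<longlonglongrightarrow> 1" by real_asymp
  ultimately have "?p \<longlonglongrightarrow> 1" by (rule tendsto_sandwich) simp
  then show ?thesis unfolding expanding_cnfs_def .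
qed

end
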